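(* Let $\Gamma$ be a countably infinite group with a strictly decreasing sequence $\{\Gamma_n\}$ of finite-index normal subgroups with trivial intersection, $X=\varprojlim\Gamma/\Gamma_n$ with left translation action and quotient maps $\pi_n:X\to\Gamma/\Gamma_n$, and for $n\ge2$ let $\gamma_n\in\Gamma_{n-1}\setminus\Gamma_n$, $C_n=\pi_n^{-1}(\gamma_n\Gamma_n)$ and $X_+=\bigcup_{n\ge2}C_n$. Let $s_1,s_2,s_3\in\Gamma$ and $x\in X$ with $s_1x\in C_{n_1}$, $s_2x\in C_{n_2}$, $s_3x\in C_{n_3}$ where $n_1<\min(n_2,n_3)$. Then there is no $y\in X$ with $s_1y\notin X_+$, $s_2y\notin X_+$ and $s_3y\in X_+$.
   Context: $X=\varprojlim\Gamma/\Gamma_n$ is the compact group of compatible sequences in $\prod_n\Gamma/\Gamma_n$ containing $\Gamma$ as a subgroup; $\Gamma$ acts by left translation. *)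

theory Defs
  imports "HOL-Algebra.Algebra"
begin

text \<open>The chain of subgroups is indexed by n \<ge> 1 (index 0 is unused).
  A point of the inverse limit X is a sequence x with x n a coset of Gam n
  (n \<ge> 1), compatible with the projections Gam/Gam(n+1) \<rightarrow> Gam/Gam n;
  the unused coordinate 0 is normalised to the whole group.\<close>

definition invlim :: "('a, 'b) monoid_scheme \<Rightarrow> (nat \<Rightarrow> 'a set) \<Rightarrow> (nat \<Rightarrow> 'a set) set" where
  "invlim G Gam = {x. x 0 = carrier G
      \<and> (\<forall>n\<ge>1. x n \<in> RCOSETS G (Gam n))
      \<and> (\<forall>n\<ge>1. \<forall>g\<in>carrier G. x (Suc n) = r_coset G (Gam (Suc n)) g \<longrightarrow> x n = r_coset G (Gam n) g)}"

definition transl :: "('a, 'b) monoid_scheme \<Rightarrow> 'a \<Rightarrow> (nat \<Rightarrow> 'a set) \<Rightarrow> (nat \<Rightarrow> 'a set)" where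
  "transl G s x = (\<lambda>n. l_coset G s (x n))"

text \<open>C_n = pi_n^{-1}(gamma_n Gam_n) (normality: gamma Gam_n = Gam_n gamma).\<close>
definition cyl :: "('a, 'b) monoid_scheme \<Rightarrow> (nat \<Rightarrow> 'a set) \<Rightarrow> (nat \<Rightarrow> 'a) \<Rightarrow> nat \<Rightarrow> (nat \<Rightarrow> 'a set) set" where
  "cyl G Gam gam n = {x \<in> invlim G Gam. x n = l_coset G (gam n) (Gam n)}"

definition Xplus :: "('a, 'b) monoid_scheme \<Rightarrow> (nat \<Rightarrow> 'a set) \<Rightarrow> (nat \<Rightarrow> 'a) \<Rightarrow> (nat \<Rightarrow> 'a set) set" where
  "Xplus G Gam gam = (\<Union>n\<in>{2..}. cyl G Gam gam n)"

end

theory Submission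
  imports Defs
begin

text \<open>Since the \<open>\<Gamma>\<^sub>n\<close> are normal and decreasing, \<open>a\<close> and \<open>b\<close> act identically on
  \<open>\<Gamma>/\<Gamma>\<^sub>m\<close> for all \<open>m \<le> n\<close> as soon as \<open>ab\<^sup>-\<^sup>1 \<in> \<Gamma>\<^sub>n\<close>. Put \<open>N = n\<^sub>1\<close>. Since \<open>n\<^sub>2, n\<^sub>3 > N\<close>,
  the points \<open>s\<^sub>2x\<close> and \<open>s\<^sub>3x\<close> have trivial coordinate \<open>\<Gamma>\<^sub>N\<close> at level \<open>N\<close>, so
  \<open>s\<^sub>2s\<^sub>3\<^sup>-\<^sup>1 \<in> \<Gamma>\<^sub>N\<close>. Now let \<open>s\<^sub>3y \<in> C\<^sub>m\<close>. If \<open>m \<le> N\<close>, then \<open>s\<^sub>2y\<close> and \<open>s\<^sub>3y\<close> agree at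
  level \<open>m\<close>, so \<open>s\<^sub>2y \<in> C\<^sub>m\<close>. If \<open>m > N\<close>, then \<open>s\<^sub>3y\<close> and \<open>s\<^sub>3x\<close> agree at level \<open>N\<close>, hence
  so do \<open>y\<close> and \<open>x\<close>, and \<open>s\<^sub>1y \<in> C\<^sub>N\<close>. The argument is purely algebraic: countability,
  finite index, trivial intersection and \<open>\<gamma>\<^sub>n \<notin> \<Gamma>\<^sub>n\<close> are not needed.\<close>

context group
begin

lemma l_coset_normal_r_coset:
  assumes "N \<lhd> G" "s \<in> carrier G" "t \<in> carrier G"
  shows "s <# (N #> t) = N #> (s \<otimes> t)"
proof -
  have N: "N \<subseteq> carrier G"
    using assms(1) normal_imp_subgroup subgroup.subset by blast
  have "s <# (N #> t) = (s <# N) #> t"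
    using coset_assoc assms N by blast
  also have "s <# N = N #> s"
    using normal.coset_eq[OF assms(1)] assms(2) by blast
  finally show ?thesis
    using coset_mult_assoc N assms by simp
qed

lemma l_coset_rcosets_closed:
  assumes "N \<lhd> G" "s \<in> carrier G" "C \<in> rcosets N"
  shows "s <# C \<in> rcosets N"
proof -
  obtain t where t: "t \<in> carrier G" "C = N #> t"
    using assms(3) unfolding RCOSETS_def by blast
  have "N \<subseteq> carrier G"
    using assms(1) normal_imp_subgroup subgroup.subset by blast
  then show ?thesis
    using l_coset_normal_r_coset[OF assms(1,2) t(1)] t(2) rcosetsI assms(2) t(1) by simp
qed

lemma l_coset_inv_cancel:
  assumes "M \<subseteq> carrier G" "s \<in> carrier G"
  shows "inv s <# (s <# M) = M"
  using assms by (simp add: lcos_m_assoc lcos_mult_one)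

lemma l_coset_rcosets_eq_iff:
  assumes "N \<lhd> G" "a \<in> carrier G" "b \<in> carrier G" "C \<in> rcosets N"
  shows "a <# C = b <# C \<longleftrightarrow> a \<otimes> inv b \<in> N"
proof -
  obtain t where t: "t \<in> carrier G" "C = N #> t"
    using assms(4) unfolding RCOSETS_def by blast
  have N: "subgroup N G"
    using assms(1) normal_imp_subgroup by blast
  have at: "a \<otimes> t \<in> carrier G" and bt: "b \<otimes> t \<in> carrier G"
    using assms(2,3) t(1) by simp_all
  have "a <# C = b <# C \<longleftrightarrow> N #> (a \<otimes> t) = N #> (b \<otimes> t)"
    using l_coset_normal_r_coset[OF assms(1)] assms(2,3) t by simp
  also have "\<dots> \<longleftrightarrow> a \<otimes> t \<in> N #> (b \<otimes> t)"
    using repr_independence[OF _ bt N] repr_independenceD[OF N at] by metis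
  also have "\<dots> \<longleftrightarrow> (a \<otimes> t) \<otimes> inv (b \<otimes> t) \<in> N"
    using subgroup.rcos_module[OF N is_group bt at] .
  also have "(a \<otimes> t) \<otimes> inv (b \<otimes> t) = a \<otimes> inv b"
    using assms(2,3) t(1) by (simp add: inv_mult_group m_assoc[symmetric])
      (simp add: m_assoc)
  finally show ?thesis .
qed

end

lemma invlim_coord_rcosets:
  "y \<in> invlim G Gam \<Longrightarrow> 1 \<le> n \<Longrightarrow> y n \<in> rcosets\<^bsub>G\<^esub> (Gam n)"
  unfolding invlim_def by blast

lemma invlim_coord_compat:
  "y \<in> invlim G Gam \<Longrightarrow> 1 \<le> n \<Longrightarrow> g \<in> carrier G
    \<Longrightarrow> y (Suc n) = Gam (Suc n) #>\<^bsub>G\<^esub> g \<Longrightarrow> y n = Gam n #>\<^bsub>G\<^esub> g"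
  unfolding invlim_def by blast

lemma invlim_coord_down:
  assumes "y \<in> invlim G Gam" "1 \<le> k" "k \<le> n" "g \<in> carrier G"
    and "y n = Gam n #>\<^bsub>G\<^esub> g"
  shows "y k = Gam k #>\<^bsub>G\<^esub> g"
  using assms(3,5)
proof (induction n rule: dec_induct)
  case (step n)
  have "1 \<le> n"
    using step.hyps assms(2) by simp
  then have "y n = Gam n #>\<^bsub>G\<^esub> g"
    using invlim_coord_compat[OF assms(1) _ assms(4) step.prems] by blast
  then show ?case
    using step.IH by blast
qed simp

lemma cyl_subset_Xplus: "2 \<le> m \<Longrightarrow> cyl G Gam gam m \<subseteq> Xplus G Gam gam"
  unfolding Xplus_def by auto

locale normal_subgroup_chain = group G for G (structure) +
  fixes Gam :: "nat \<Rightarrow> 'a set"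
  assumes chain_normal: "1 \<le> n \<Longrightarrow> Gam n \<lhd> G"
    and chain_decreasing: "1 \<le> n \<Longrightarrow> Gam (Suc n) \<subseteq> Gam n"
begin

lemma chain_subgroup: "1 \<le> n \<Longrightarrow> subgroup (Gam n) G"
  using chain_normal normal_imp_subgroup by blast

lemma chain_subset_carrier: "1 \<le> n \<Longrightarrow> Gam n \<subseteq> carrier G"
  using chain_subgroup subgroup.subset by blast

lemma chain_antimono:
  assumes "1 \<le> k" "k \<le> n"
  shows "Gam n \<subseteq> Gam k"
  using assms(2)
proof (induction n rule: dec_induct)
  case (step n)
  then show ?case
    using chain_decreasing assms(1) by (meson order_trans le_trans)
qed simp

lemma invlim_coord_subset: "y \<in> invlim G Gam \<Longrightarrow> 1 \<le> n \<Longrightarrow> y n \<subseteq> carrier G"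
  using invlim_coord_rcosets rcosets_part_G[OF chain_subgroup] by blast

lemma transl_in_invlim:
  assumes y: "y \<in> invlim G Gam" and s: "s \<in> carrier G"
  shows "transl G s y \<in> invlim G Gam"
  unfolding invlim_def
proof (intro CollectI conjI allI impI ballI)
  show "transl G s y 0 = carrier G"
    using y coset_join3[OF s subgroup_self] s unfolding invlim_def transl_def by simp
next
  fix n :: nat
  assume "1 \<le> n"
  then show "transl G s y n \<in> rcosets (Gam n)"
    unfolding transl_def
    using l_coset_rcosets_closed chain_normal s invlim_coord_rcosets[OF y] by blast
next
  fix n :: nat and g
  assume n: "1 \<le> n" and g: "g \<in> carrier G"
    and "transl G s y (Suc n) = Gam (Suc n) #> g"
  then have "inv s <# (s <# y (Suc n)) = inv s <# (Gam (Suc n) #> g)"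
    unfolding transl_def by simp
  moreover have "y (Suc n) \<subseteq> carrier G"
    using invlim_coord_subset[OF y] by simp
  ultimately have "y (Suc n) = Gam (Suc n) #> (inv s \<otimes> g)"
    using l_coset_inv_cancel l_coset_normal_r_coset chain_normal s g by simp
  then have "y n = Gam n #> (inv s \<otimes> g)"
    using invlim_coord_down[OF y n, of "Suc n"] s g by simp
  then show "transl G s y n = Gam n #> g"
    unfolding transl_def
    using l_coset_normal_r_coset[OF chain_normal[OF n]] s g by (simp add: m_assoc[symmetric])
qed

lemma cyl_coord_below:
  assumes z: "z \<in> cyl G Gam gam m" and gam: "gam m \<in> Gam (m - 1)"
    and k: "1 \<le> k" "k < m"
  shows "z k = Gam k"
proof -
  have "Gam (m - 1) \<subseteq> Gam k"
    using chain_antimono k by simp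
  with gam have gam_k: "gam m \<in> Gam k" by blast
  then have gam_carrier: "gam m \<in> carrier G"
    using chain_subset_carrier k(1) by blast
  have "z m = Gam m #> gam m"
    using z normal.coset_eq[OF chain_normal] gam_carrier k unfolding cyl_def by simp
  then have "z k = Gam k #> gam m"
    using invlim_coord_down[of z G Gam k m] z gam_carrier k unfolding cyl_def by simp
  then show ?thesis
    using coset_join2[OF gam_carrier chain_subgroup[OF k(1)] gam_k] by simp
qed

lemma transl_in_cyl_iff:
  assumes "y \<in> invlim G Gam" "s \<in> carrier G"
  shows "transl G s y \<in> cyl G Gam gam m \<longleftrightarrow> s <# y m = gam m <# Gam m"
  using transl_in_invlim[OF assms] unfolding cyl_def by (auto simp: transl_def)

lemma transl_Xplus_propagate:
  assumes gam: "\<And>n. 2 \<le> n \<Longrightarrow> gam n \<in> Gam (n - 1)"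
    and s: "s1 \<in> carrier G" "s2 \<in> carrier G" "s3 \<in> carrier G"
    and x: "x \<in> invlim G Gam" and N: "2 \<le> N"
    and x1: "transl G s1 x \<in> cyl G Gam gam N"
    and x2: "transl G s2 x \<in> cyl G Gam gam n2" "N < n2"
    and x3: "transl G s3 x \<in> cyl G Gam gam n3" "N < n3"
    and y: "y \<in> invlim G Gam" and y3: "transl G s3 y \<in> Xplus G Gam gam"
  shows "transl G s1 y \<in> Xplus G Gam gam \<or> transl G s2 y \<in> Xplus G Gam gam"
proof -
  have N1: "1 \<le> N" using N by simp
  have s2x: "s2 <# x N = Gam N" and s3x: "s3 <# x N = Gam N"
    using cyl_coord_below[OF x2(1) gam] cyl_coord_below[OF x3(1) gam] x2(2) x3(2) N
    unfolding transl_def by simp_all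
  then have s2_s3: "s2 \<otimes> inv s3 \<in> Gam N"
    using l_coset_rcosets_eq_iff[OF chain_normal[OF N1] s(2,3) invlim_coord_rcosets[OF x N1]]
    by simp
  obtain m where m: "2 \<le> m" "s3 <# y m = gam m <# Gam m"
    using y3 transl_in_cyl_iff[OF y s(3)] unfolding Xplus_def by auto
  then have m1: "1 \<le> m" by simp
  show ?thesis
  proof (cases "m \<le> N")
    case True
    then have "s2 \<otimes> inv s3 \<in> Gam m"
      using s2_s3 chain_antimono[of m N] m(1) by auto
    then have "s2 <# y m = s3 <# y m"
      using l_coset_rcosets_eq_iff[OF chain_normal[OF m1] s(2,3) invlim_coord_rcosets[OF y m1]]
      by simp
    then have "transl G s2 y \<in> cyl G Gam gam m"
      using transl_in_cyl_iff[OF y s(2)] m by simp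
    then show ?thesis
      using cyl_subset_Xplus m(1) by blast
  next
    case False
    have "transl G s3 y \<in> cyl G Gam gam m"
      using transl_in_cyl_iff[OF y s(3)] m(2) by simp
    from cyl_coord_below[OF this gam[OF m(1)] N1] have "s3 <# y N = s3 <# x N"
      using False s3x unfolding transl_def by simp
    then have "y N = x N"
      using l_coset_inv_cancel[OF invlim_coord_subset[OF y N1] s(3)]
        l_coset_inv_cancel[OF invlim_coord_subset[OF x N1] s(3)] by metis
    then have "transl G s1 y \<in> cyl G Gam gam N"
      using x1 transl_in_cyl_iff[OF x s(1)] transl_in_cyl_iff[OF y s(1)] by simp
    then show ?thesis
      using cyl_subset_Xplus N by blast
  qed
qed

end

theorem lemma4p6:
  fixes G :: "('a, 'b) monoid_scheme" and Gam :: "nat \<Rightarrow> 'a set" and gam :: "nat \<Rightarrow> 'a"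
    and s1 s2 s3 :: 'a and x :: "nat \<Rightarrow> 'a set" and n1 n2 n3 :: nat
  assumes "group G"
    and "countable (carrier G)" and "infinite (carrier G)"
    and "\<forall>n\<ge>1. normal (Gam n) G"
    and "\<forall>n\<ge>1. finite (RCOSETS G (Gam n))"
    and "\<forall>n\<ge>1. Gam (Suc n) \<subset> Gam n"
    and "(\<Inter>n\<in>{1..}. Gam n) = {\<one>\<^bsub>G\<^esub>}"
    and "\<forall>n\<ge>2. gam n \<in> Gam (n - 1) - Gam n"
    and "s1 \<in> carrier G" and "s2 \<in> carrier G" and "s3 \<in> carrier G"
    and "x \<in> invlim G Gam"
    and "n1 \<ge> 2" and "n2 \<ge> 2" and "n3 \<ge> 2"
    and "transl G s1 x \<in> cyl G Gam gam n1"
    and "transl G s2 x \<in> cyl G Gam gam n2"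
    and "transl G s3 x \<in> cyl G Gam gam n3"
    and "n1 < min n2 n3"
  shows "\<not> (\<exists>y\<in>invlim G Gam. transl G s1 y \<notin> Xplus G Gam gam
              \<and> transl G s2 y \<notin> Xplus G Gam gam \<and> transl G s3 y \<in> Xplus G Gam gam)"
proof -
  interpret normal_subgroup_chain G Gam
    using assms(1,4,6)
    by (auto simp: normal_subgroup_chain_def normal_subgroup_chain_axioms_def)
  have "gam n \<in> Gam (n - 1)" if "2 \<le> n" for n
    using assms(8) that by blast
  moreover have "n1 < n2" "n1 < n3"
    using assms(19) by simp_all
  ultimately show ?thesis
    using transl_Xplus_propagate[of gam s1 s2 s3 x n1 n2 n3] assms(9-13,16-18) by blast
qed

end
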